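(* Let $S>0$, $\zeta\in\{0,1\}$, $\phi\in(-1,1)$, and let $(u_n)_{n\in\mathbb{N}}$ be the $\phi$-market impact scenario defined below. Then there exists $R>0$ such that for all $x\in(-R,R)$ the scenario is regular ($N(x)=+\infty$ where $N(x)=\inf\{n: s_n(x)=-S\}$), the function $x\mapsto\sum_{n\ge0}u_n(x)$ is given by a power series on $(-R,R)$ (in particular it is $\mathcal{C}^\infty$ there), and $$\sum_{n=0}^{+\infty}u_n(x)=\frac{1}{1-\phi}\,x+\frac{1}{S}\,\frac{(1+\zeta)\phi}{(1-\phi)^3(1+\phi)}\,x^2+o(x^2)\quad\text{as }x\to0.$$
   Context: Fix $S>0$, $\zeta\in\{0,1\}$ and $\phi\in\mathbb{R}$. For $a,b\in\mathbb{R}$ write $a\vee b=\max(a,b)$. The $\phi$-market impact scenario starting from $x\in\mathbb{R}$ is the sequence of real-valued functions $(u_n)_{n\in\mathbb{N}}$ defined by $u_0(x)=x\vee(-S)$ and, for all $n\in\mathbb{N}$, $u_{n+1}(x)=\Big(\phi\big(1+\tfrac{s_n(x)}{S}\big)^{1+\zeta}u_n(x)\Big)\vee\big(-s_n(x)-S\big)$, where $s_n(x)=\sum_{k=0}^n u_k(x)$. *)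

theory Defs
  imports "HOL-Analysis.Analysis" "HOL-Library.Landau_Symbols"
begin

primrec mis :: "real \<Rightarrow> nat \<Rightarrow> real \<Rightarrow> real \<Rightarrow> nat \<Rightarrow> real \<times> real" where
  "mis S \<zeta> \<phi> x 0 = (max x (-S), max x (-S))"
| "mis S \<zeta> \<phi> x (Suc n) =
     (let u = fst (mis S \<zeta> \<phi> x n); s = snd (mis S \<zeta> \<phi> x n);
          u' = max (\<phi> * (1 + s / S) ^ (1 + \<zeta>) * u) (- s - S)
      in (u', s + u'))"

definition scen_u :: "real \<Rightarrow> nat \<Rightarrow> real \<Rightarrow> real \<Rightarrow> nat \<Rightarrow> real" where
  "scen_u S \<zeta> \<phi> x n = fst (mis S \<zeta> \<phi> x n)"

definition scen_s :: "real \<Rightarrow> nat \<Rightarrow> real \<Rightarrow> real \<Rightarrow> nat \<Rightarrow> real" where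
  "scen_s S \<zeta> \<phi> x n = snd (mis S \<zeta> \<phi> x n)"

lemma scen_s_eq_sum: "scen_s S \<zeta> \<phi> x n = (\<Sum>k\<le>n. scen_u S \<zeta> \<phi> x k)"
  by (induction n) (simp_all add: scen_s_def scen_u_def Let_def)

definition scen_regular :: "real \<Rightarrow> nat \<Rightarrow> real \<Rightarrow> real \<Rightarrow> bool" where
  "scen_regular S \<zeta> \<phi> x \<longleftrightarrow> (\<forall>n. scen_s S \<zeta> \<phi> x n \<noteq> - S)"

end

theory Submission
  imports Defs "HOL-Complex_Analysis.Cauchy_Integral_Formula"
begin

text \<open>
  For small \<open>|x|\<close> the floor \<open>-s\<^sub>n - S\<close> never binds, so the scenario follows the uncapped
  recursion \<open>u\<^sub>n\<^sub>+\<^sub>1 = \<phi> (1 + s\<^sub>n/S)\<^sup>m u\<^sub>n\<close> with \<open>m = 1 + \<zeta>\<close>. Its terms decay geometrically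
  with ratio \<open>(1 + |\<phi>|)/2\<close> while \<open>|s\<^sub>n| \<le> S/6\<close>, which gives regularity. Started from a complex
  \<open>z\<close>, the same recursion produces entire functions dominated by one geometric series on a disc,
  so their sum is holomorphic there and restricts to a real power series.

  For the expansion of \<open>F = \<Sum> u\<^sub>n\<close>, summing \<open>u\<^sub>n\<^sub>+\<^sub>1 - \<phi> u\<^sub>n\<close> gives
  \<open>(1 - \<phi>) F = x + O(x\<^sup>2)\<close> and, one order further, \<open>(1 - \<phi>) F = x + (m \<phi>/S) \<Sum> s\<^sub>n u\<^sub>n + O(x\<^sup>3)\<close>;
  summing \<open>u\<^sub>n\<^sub>+\<^sub>1\<^sup>2 - \<phi>\<^sup>2 u\<^sub>n\<^sup>2\<close> gives \<open>(1 - \<phi>\<^sup>2) \<Sum> u\<^sub>n\<^sup>2 = x\<^sup>2 + O(x\<^sup>3)\<close>. The discrete identity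
  \<open>2 \<Sum> s\<^sub>n u\<^sub>n = F\<^sup>2 + \<Sum> u\<^sub>n\<^sup>2\<close> then determines \<open>\<Sum> s\<^sub>n u\<^sub>n\<close> up to \<open>O(x\<^sup>3)\<close>, hence the
  quadratic coefficient.
\<close>

lemma norm_one_plus_power_minus_one_le:
  fixes w :: "'a::real_normed_field"
  assumes "norm w \<le> 1"
  shows "norm ((1 + w) ^ k - 1) \<le> (2 ^ k - 1) * norm w"
proof -
  have "norm ((1 + w) ^ i) \<le> 2 ^ i" for i
  proof -
    have "norm (1 + w) \<le> 2"
      using norm_triangle_ineq[of 1 w] assms by simp
    then show ?thesis
      unfolding norm_power by (rule power_mono) simp
  qed
  then have "norm (\<Sum>i<k. (1 + w) ^ i) \<le> (\<Sum>i<k. 2 ^ i :: real)"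
    using norm_sum order_trans sum_mono by (metis (no_types, lifting))
  also have "(\<Sum>i<k. 2 ^ i :: real) = 2 ^ k - 1"
    by (simp add: sum_gp_strict)
  finally have "norm (\<Sum>i<k. (1 + w) ^ i) \<le> 2 ^ k - 1" .
  then have "norm w * norm (\<Sum>i<k. (1 + w) ^ i) \<le> norm w * (2 ^ k - 1)"
    by (simp add: mult_left_mono)
  then show ?thesis
    by (simp add: power_diff_1_eq norm_mult mult.commute)
qed

lemma abs_one_plus_power_minus_linear_le:
  fixes t :: real
  assumes "m \<le> 2"
  shows "\<bar>(1 + t) ^ m - 1 - real m * t\<bar> \<le> t\<^sup>2"
proof -
  have "m = 0 \<or> m = 1 \<or> m = 2" using assms by auto
  then show ?thesis by (auto simp: power2_eq_square algebra_simps)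
qed

lemma sums_Suc_minus_mult:
  fixes v :: "nat \<Rightarrow> 'a::real_normed_field"
  assumes "summable v"
  shows "(\<lambda>n. v (Suc n) - c * v n) sums (suminf v * (1 - c) - v 0)"
proof -
  have "(\<lambda>n. v (Suc n)) sums (suminf v - v 0)"
    using assms by (simp add: sums_Suc_iff summable_sums)
  then have "(\<lambda>n. v (Suc n) - c * v n) sums (suminf v - v 0 - c * suminf v)"
    using assms by (intro sums_diff sums_mult summable_sums)
  then show ?thesis by (simp add: algebra_simps)
qed

lemma sums_partial_sum_times_term:
  fixes u :: "nat \<Rightarrow> 'a::real_normed_field"
  assumes "summable u" and "summable (\<lambda>n. u n ^ 2)"
  shows "(\<lambda>n. 2 * (\<Sum>k\<le>n. u k) * u n) sums ((suminf u)\<^sup>2 + (\<Sum>n. u n ^ 2))"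
proof -
  have partial: "(\<Sum>n<N. 2 * (\<Sum>k\<le>n. u k) * u n) = (\<Sum>n<N. u n)\<^sup>2 + (\<Sum>n<N. u n ^ 2)" for N
    by (induction N) (simp_all add: lessThan_Suc_atMost[symmetric] power2_eq_square algebra_simps)
  have "(\<lambda>N. (\<Sum>n<N. u n)\<^sup>2 + (\<Sum>n<N. u n ^ 2)) \<longlonglongrightarrow> (suminf u)\<^sup>2 + (\<Sum>n. u n ^ 2)"
    using assms by (intro tendsto_intros summable_LIMSEQ)
  then show ?thesis
    unfolding sums_def partial .
qed

lemma bigo_at_0_of_sums_geometric:
  fixes a :: "real \<Rightarrow> nat \<Rightarrow> real"
  assumes "r > 0" and "0 \<le> p" and "p < 1"
    and sums: "\<And>x. \<bar>x\<bar> < r \<Longrightarrow> a x sums A x"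
    and bound: "\<And>x n. \<bar>x\<bar> < r \<Longrightarrow> \<bar>a x n\<bar> \<le> C * \<bar>x\<bar> ^ k * p ^ n"
  shows "A \<in> O[at 0](\<lambda>x. x ^ k)"
proof (rule landau_o.bigI)
  show "\<bar>C\<bar> / (1 - p) + 1 > 0" using \<open>p < 1\<close> by (simp add: add_nonneg_pos)
  have "\<bar>A x\<bar> \<le> (\<bar>C\<bar> / (1 - p) + 1) * \<bar>x ^ k\<bar>" if "\<bar>x\<bar> < r" for x
  proof -
    have geom: "(\<lambda>n. C * \<bar>x\<bar> ^ k * p ^ n) sums (C * \<bar>x\<bar> ^ k / (1 - p))"
      using sums_mult[OF geometric_sums[of p], of "C * \<bar>x\<bar> ^ k"] assms(2,3) by simp
    have "A x \<le> C * \<bar>x\<bar> ^ k / (1 - p)"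
      by (rule sums_le[OF _ sums[OF that] geom]) (use bound[OF that] in \<open>simp add: abs_le_iff\<close>)
    moreover have "- (C * \<bar>x\<bar> ^ k / (1 - p)) \<le> A x"
      by (rule sums_le[OF _ sums_minus[OF geom] sums[OF that]]) (use bound[OF that] in \<open>metis abs_le_iff minus_le_iff\<close>)
    ultimately have "\<bar>A x\<bar> \<le> C * \<bar>x\<bar> ^ k / (1 - p)" by linarith
    also have "\<dots> \<le> \<bar>C\<bar> / (1 - p) * \<bar>x ^ k\<bar>"
      using \<open>p < 1\<close> by (simp add: power_abs divide_right_mono mult_right_mono)
    also have "\<dots> \<le> (\<bar>C\<bar> / (1 - p) + 1) * \<bar>x ^ k\<bar>"
      by (rule mult_right_mono) auto
    finally show ?thesis .
  qed
  then show "\<forall>\<^sub>F x in at 0. norm (A x) \<le> (\<bar>C\<bar> / (1 - p) + 1) * norm (x ^ k)"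
    unfolding eventually_at using \<open>r > 0\<close> by (auto intro!: exI[of _ r])
qed

lemma power_smallo_power_at_0:
  assumes "k < l"
  shows "(\<lambda>x::real. x ^ l) \<in> o[at 0](\<lambda>x. x ^ k)"
proof (rule landau_o.smallI)
  fix c :: real
  assume "c > 0"
  have "\<forall>x::real. x \<noteq> 0 \<and> dist x 0 < min c 1 \<longrightarrow> norm (x ^ l) \<le> c * norm (x ^ k)"
  proof (intro allI impI)
    fix x :: real
    assume "x \<noteq> 0 \<and> dist x 0 < min c 1"
    then have x: "\<bar>x\<bar> \<le> c" "\<bar>x\<bar> \<le> 1" by auto
    have "\<bar>x\<bar> ^ l = \<bar>x\<bar> ^ (l - k) * \<bar>x\<bar> ^ k"
      using assms by (simp flip: power_add)
    also have "\<dots> \<le> \<bar>x\<bar> ^ 1 * \<bar>x\<bar> ^ k"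
      using assms x by (intro mult_right_mono power_decreasing) auto
    also have "\<dots> \<le> c * \<bar>x\<bar> ^ k"
      using x by (intro mult_right_mono) auto
    finally show "norm (x ^ l) \<le> c * norm (x ^ k)"
      by (simp add: power_abs)
  qed
  moreover have "min c 1 > 0" using \<open>c > 0\<close> by simp
  ultimately show "\<forall>\<^sub>F x in at (0::real). norm (x ^ l) \<le> c * norm (x ^ k)"
    unfolding eventually_at by blast
qed

lemma bigo_const_mult: "f \<in> O[F](g) \<Longrightarrow> (\<lambda>x. c * f x) \<in> O[F](g)"
  by (cases "c = 0") simp_all

lemma holomorphic_on_ball_real_power_series:
  fixes F :: "complex \<Rightarrow> complex"
  assumes "F holomorphic_on ball 0 r"
  shows "\<exists>a :: nat \<Rightarrow> real. \<forall>x \<in> {-r<..<r}. (\<lambda>k. a k * x ^ k) sums Re (F (of_real x))"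
proof (intro exI ballI)
  fix x :: real
  assume "x \<in> {-r<..<r}"
  then have "complex_of_real x \<in> ball 0 r" by (simp add: dist_0_norm abs_less_iff)
  define c where "c k = (deriv ^^ k) F 0 / fact k" for k
  have "(\<lambda>k. c k * (of_real x - 0) ^ k) sums F (of_real x)"
    unfolding c_def by (rule holomorphic_power_series[OF assms \<open>of_real x \<in> ball 0 r\<close>])
  from sums_Re[OF this] show "(\<lambda>k. Re (c k) * x ^ k) sums Re (F (of_real x))"
    by (simp flip: of_real_power)
qed

text \<open>The scenario without the floor \<open>-s\<^sub>n - S\<close>, as pairs \<open>(u\<^sub>n, s\<^sub>n)\<close>; it is defined over any
  normed field so that it can be run from complex starting points.\<close>

primrec uncapped :: "real \<Rightarrow> nat \<Rightarrow> real \<Rightarrow> 'a::real_normed_field \<Rightarrow> nat \<Rightarrow> 'a \<times> 'a" where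
  "uncapped S m \<phi> z 0 = (z, z)"
| "uncapped S m \<phi> z (Suc n) =
     (let (u, s) = uncapped S m \<phi> z n; u' = of_real \<phi> * (1 + s / of_real S) ^ m * u in (u', s + u'))"

abbreviation uncapped_u :: "real \<Rightarrow> nat \<Rightarrow> real \<Rightarrow> 'a::real_normed_field \<Rightarrow> nat \<Rightarrow> 'a" where
  "uncapped_u S m \<phi> z n \<equiv> fst (uncapped S m \<phi> z n)"

abbreviation uncapped_s :: "real \<Rightarrow> nat \<Rightarrow> real \<Rightarrow> 'a::real_normed_field \<Rightarrow> nat \<Rightarrow> 'a" where
  "uncapped_s S m \<phi> z n \<equiv> snd (uncapped S m \<phi> z n)"

lemma uncapped_Suc:
  "uncapped_u S m \<phi> z (Suc n) = of_real \<phi> * (1 + uncapped_s S m \<phi> z n / of_real S) ^ m * uncapped_u S m \<phi> z n"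
  "uncapped_s S m \<phi> z (Suc n) = uncapped_s S m \<phi> z n + uncapped_u S m \<phi> z (Suc n)"
  by (simp_all add: case_prod_beta Let_def)

declare uncapped.simps(2) [simp del]

lemma uncapped_s_eq_sum: "uncapped_s S m \<phi> z n = (\<Sum>k\<le>n. uncapped_u S m \<phi> z k)"
  by (induction n) (simp_all add: uncapped_Suc)

lemma uncapped_of_real:
  "uncapped S m \<phi> (of_real x :: 'a::real_normed_field) n =
     map_prod of_real of_real (uncapped S m \<phi> x n)"
  by (induction n) (simp_all add: uncapped_Suc prod_eq_iff)

lemma holomorphic_uncapped:
  "(\<lambda>z. uncapped_u S m \<phi> z n) holomorphic_on UNIV \<and> (\<lambda>z. uncapped_s S m \<phi> z n) holomorphic_on UNIV"
proof (induction n)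
  case (Suc n)
  then have "(\<lambda>z. uncapped_u S m \<phi> z (Suc n)) holomorphic_on UNIV"
    unfolding uncapped_Suc by (intro holomorphic_intros) auto
  with Suc show ?case
    unfolding uncapped_Suc(2) by (simp add: holomorphic_on_add)
qed simp

locale impact_params =
  fixes S \<phi> :: real and m :: nat
  assumes S_pos: "S > 0" and abs_phi_less_1: "\<bar>\<phi>\<bar> < 1" and m_le_2: "m \<le> 2"
begin

definition rate :: real where "rate = (1 + \<bar>\<phi>\<bar>) / 2"

text \<open>The radius is chosen so that \<open>radius / (1 - rate) = S (1 - |\<phi>|) / 6\<close>: then
  \<open>|s\<^sub>n| \<le> S (1 - |\<phi>|) / 6\<close> and the multiplier \<open>|\<phi>| |1 + s\<^sub>n/S|\<^sup>m\<close> stays below \<open>rate\<close>.\<close>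

definition radius :: real where "radius = S * (1 - \<bar>\<phi>\<bar>)\<^sup>2 / 12"

lemma rate_nonneg: "0 \<le> rate" and rate_less_1: "rate < 1"
  using abs_phi_less_1 by (auto simp: rate_def)

lemma radius_pos: "radius > 0"
  using S_pos abs_phi_less_1 by (simp add: radius_def)

lemma eventually_abs_le_radius: "\<forall>\<^sub>F x in at 0. \<bar>x\<bar> \<le> radius"
  using radius_pos unfolding eventually_at by (intro exI[of _ radius]) auto

lemma sum_rate_powers_le: "(\<Sum>k\<le>n. rate ^ k) \<le> 1 / (1 - rate)"
  using sum_le_suminf[OF summable_geometric, of rate "{..n}"] suminf_geometric[of rate]
    rate_nonneg rate_less_1 by simp

lemma summable_rate_bound:
  fixes a :: "nat \<Rightarrow> real"
  assumes "\<And>n. \<bar>a n\<bar> \<le> B * rate ^ n"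
  shows "summable a"
  using assms rate_nonneg rate_less_1
  by (intro summable_comparison_test'[OF summable_mult[OF summable_geometric, of rate B]]) auto

lemma div_one_minus_rate_le:
  assumes "r \<le> radius"
  shows "r / (1 - rate) \<le> S * (1 - \<bar>\<phi>\<bar>) / 6"
  using assms abs_phi_less_1 S_pos
  by (simp add: rate_def radius_def pos_divide_le_eq power2_eq_square field_simps)

lemma norm_one_plus_power_m_minus_one_le:
  fixes w :: "'a::real_normed_field"
  assumes "norm w \<le> 1"
  shows "norm ((1 + w) ^ m - 1) \<le> 3 * norm w"
proof -
  have "(2::real) ^ m \<le> 2 ^ 2"
    using m_le_2 by (intro power_increasing) auto
  then have "(2 ^ m - 1) * norm w \<le> 3 * norm w"
    by (intro mult_right_mono) auto
  with norm_one_plus_power_minus_one_le[OF assms] show ?thesis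
    by (rule order_trans)
qed

lemma abs_phi_times_norm_power_le_rate:
  fixes w :: "'a::real_normed_field"
  assumes w: "norm w \<le> (1 - \<bar>\<phi>\<bar>) / 6"
  shows "\<bar>\<phi>\<bar> * norm ((1 + w) ^ m) \<le> rate"
proof -
  have "norm ((1 + w) ^ m) \<le> 1 + norm ((1 + w) ^ m - 1)"
    using norm_triangle_ineq[of 1 "(1 + w) ^ m - 1"] by simp
  also have "\<dots> \<le> 1 + 3 * norm w"
    using norm_one_plus_power_m_minus_one_le[of w] w abs_phi_less_1 by simp
  also have "\<dots> \<le> 1 + (1 - \<bar>\<phi>\<bar>) / 2"
    using w by simp
  finally have "\<bar>\<phi>\<bar> * norm ((1 + w) ^ m) \<le> \<bar>\<phi>\<bar> * (1 + (1 - \<bar>\<phi>\<bar>) / 2)"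
    by (rule mult_left_mono) simp
  also have "a * (1 + (1 - a) / 2) \<le> (1 + a) / 2" for a :: real
  proof -
    have "0 \<le> (1 - a)\<^sup>2" by simp
    then show ?thesis by (simp add: power2_eq_square field_simps)
  qed
  then have "\<bar>\<phi>\<bar> * (1 + (1 - \<bar>\<phi>\<bar>) / 2) \<le> rate"
    unfolding rate_def .
  finally show ?thesis .
qed

lemma norm_uncapped_le:
  fixes z :: "'a::real_normed_field"
  assumes z: "norm z \<le> radius"
  shows "norm (uncapped_u S m \<phi> z n) \<le> norm z * rate ^ n"
    and "norm (uncapped_s S m \<phi> z n) \<le> norm z / (1 - rate)"
proof -
  let ?u = "uncapped_u S m \<phi> z" and ?s = "uncapped_s S m \<phi> z"
  have partial_le: "norm z * (\<Sum>k\<le>n. rate ^ k) \<le> norm z / (1 - rate)" for n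
    using mult_left_mono[OF sum_rate_powers_le, of "norm z" n] by simp
  have "norm (?u n) \<le> norm z * rate ^ n \<and> norm (?s n) \<le> norm z * (\<Sum>k\<le>n. rate ^ k)" for n
  proof (induction n)
    case (Suc n)
    define w where "w = ?s n / of_real S"
    have "norm w \<le> norm z / (1 - rate) / S"
      using Suc partial_le[of n] S_pos unfolding w_def norm_divide norm_of_real abs_of_pos[OF S_pos]
      by (intro divide_right_mono) auto
    also have "\<dots> \<le> (1 - \<bar>\<phi>\<bar>) / 6"
      using divide_right_mono[OF div_one_minus_rate_le[OF z], of S] S_pos by simp
    finally have "\<bar>\<phi>\<bar> * norm ((1 + w) ^ m) \<le> rate"
      by (rule abs_phi_times_norm_power_le_rate)
    then have "norm (?u (Suc n)) \<le> rate * norm (?u n)"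
      by (simp add: uncapped_Suc norm_mult w_def mult_right_mono)
    also have "\<dots> \<le> rate * (norm z * rate ^ n)"
      using Suc rate_nonneg by (intro mult_left_mono) auto
    finally have u: "norm (?u (Suc n)) \<le> norm z * rate ^ Suc n"
      by (simp add: mult_ac)
    have "norm (?s (Suc n)) \<le> norm (?s n) + norm (?u (Suc n))"
      by (simp add: uncapped_Suc(2) norm_triangle_ineq)
    also have "\<dots> \<le> norm z * (\<Sum>k\<le>Suc n. rate ^ k)"
      using Suc u by (simp add: distrib_left)
    finally show ?case using u by simp
  qed simp
  note bounds = this
  show "norm (?u n) \<le> norm z * rate ^ n"
    using bounds by blast
  show "norm (?s n) \<le> norm z / (1 - rate)"
    using bounds[of n] partial_le[of n] by linarith
qed

lemma abs_uncapped_u_le: "\<bar>x\<bar> \<le> radius \<Longrightarrow> \<bar>uncapped_u S m \<phi> x n\<bar> \<le> \<bar>x\<bar> * rate ^ n"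
  using norm_uncapped_le(1)[of x] by simp

lemma abs_uncapped_s_le: "\<bar>x\<bar> \<le> radius \<Longrightarrow> \<bar>uncapped_s S m \<phi> x n\<bar> \<le> \<bar>x\<bar> / (1 - rate)"
  using norm_uncapped_le(2)[of x] by simp

lemma div_one_minus_rate_le_S:
  assumes "r \<le> radius"
  shows "r / (1 - rate) \<le> S / 6"
proof -
  have "S * (1 - \<bar>\<phi>\<bar>) \<le> S"
    using S_pos abs_phi_less_1 by (intro mult_left_le) auto
  then have "S * (1 - \<bar>\<phi>\<bar>) / 6 \<le> S / 6"
    by (rule divide_right_mono) simp
  with div_one_minus_rate_le[OF assms] show ?thesis
    by (rule order_trans)
qed

lemma abs_uncapped_s_le_S: "\<bar>x\<bar> \<le> radius \<Longrightarrow> \<bar>uncapped_s S m \<phi> x n\<bar> \<le> S / 6"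
  using abs_uncapped_s_le[of x n] div_one_minus_rate_le_S[of "\<bar>x\<bar>"] by linarith

lemma abs_uncapped_ratio_le:
  assumes "\<bar>x\<bar> \<le> radius"
  shows "\<bar>uncapped_s S m \<phi> x n / S\<bar> \<le> \<bar>x\<bar> / ((1 - rate) * S)"
    and "\<bar>x\<bar> / ((1 - rate) * S) \<le> 1"
proof -
  show "\<bar>uncapped_s S m \<phi> x n / S\<bar> \<le> \<bar>x\<bar> / ((1 - rate) * S)"
    using divide_right_mono[OF abs_uncapped_s_le[OF assms, of n], of S] S_pos
    by (simp add: abs_divide)
  have "\<bar>x\<bar> / (1 - rate) \<le> S"
    by (rule order_trans[OF div_one_minus_rate_le_S[OF assms]]) (use S_pos in simp)
  then have "\<bar>x\<bar> / (1 - rate) / S \<le> S / S"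
    by (rule divide_right_mono) (use S_pos in simp)
  then show "\<bar>x\<bar> / ((1 - rate) * S) \<le> 1" using S_pos by simp
qed

lemma abs_uncapped_u_le_abs:
  assumes "\<bar>x\<bar> \<le> radius"
  shows "\<bar>uncapped_u S m \<phi> x n\<bar> \<le> \<bar>x\<bar>"
proof -
  have "\<bar>x\<bar> * rate ^ n \<le> \<bar>x\<bar>"
    using rate_nonneg rate_less_1 by (intro mult_left_le power_le_one) auto
  with abs_uncapped_u_le[OF assms] show ?thesis
    by (rule order_trans)
qed

lemma summable_uncapped_u: "\<bar>x\<bar> \<le> radius \<Longrightarrow> summable (uncapped_u S m \<phi> x)"
  using abs_uncapped_u_le by (intro summable_rate_bound[where B = "\<bar>x\<bar>"]) simp

lemma scen_eq_uncapped:
  assumes m: "m = 1 + \<zeta>" and x: "\<bar>x\<bar> \<le> radius"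
  shows "scen_u S \<zeta> \<phi> x n = uncapped_u S m \<phi> x n \<and> scen_s S \<zeta> \<phi> x n = uncapped_s S m \<phi> x n"
proof -
  have "radius \<le> S / 12"
    using S_pos abs_phi_less_1 by (simp add: radius_def power_le_one mult_left_le)
  then have x_small: "\<bar>x\<bar> \<le> S / 12"
    using x by linarith
  show ?thesis
  proof (induction n)
    case 0
    show ?case using x_small S_pos by (simp add: scen_u_def scen_s_def)
  next
    case (Suc n)
    \<comment> \<open>the floor \<open>- s\<^sub>n - S\<close> in the definition of the scenario is never active\<close>
    have "- uncapped_s S m \<phi> x n - S \<le> uncapped_u S m \<phi> x (Suc n)"
      using abs_uncapped_u_le_abs[OF x, of "Suc n"] abs_uncapped_s_le_S[OF x, of n] x_small
      by linarith
    with Suc show ?case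
      by (simp add: scen_u_def scen_s_def Let_def uncapped_Suc m)
  qed
qed

lemma scen_u_eq_uncapped_u:
  "m = 1 + \<zeta> \<Longrightarrow> \<bar>x\<bar> \<le> radius \<Longrightarrow> scen_u S \<zeta> \<phi> x = uncapped_u S m \<phi> x"
  using scen_eq_uncapped by blast

lemma scen_regular_small:
  assumes "m = 1 + \<zeta>" and x: "\<bar>x\<bar> \<le> radius"
  shows "scen_regular S \<zeta> \<phi> x"
proof -
  have "uncapped_s S m \<phi> x n \<noteq> - S" for n
    using abs_uncapped_s_le_S[OF x, of n] S_pos by auto
  then show ?thesis
    using scen_eq_uncapped[OF assms] by (simp add: scen_regular_def)
qed

lemma uncapped_step_eq:
  fixes x :: real
  shows "uncapped_u S m \<phi> x (Suc n) - \<phi> * uncapped_u S m \<phi> x n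
    = \<phi> * ((1 + uncapped_s S m \<phi> x n / S) ^ m - 1) * uncapped_u S m \<phi> x n"
  by (simp add: uncapped_Suc algebra_simps)

lemma abs_uncapped_step_le:
  assumes x: "\<bar>x\<bar> \<le> radius"
  shows "\<bar>uncapped_u S m \<phi> x (Suc n) - \<phi> * uncapped_u S m \<phi> x n\<bar>
    \<le> 3 / ((1 - rate) * S) * \<bar>x\<bar> ^ 2 * rate ^ n"
proof -
  define t where "t = uncapped_s S m \<phi> x n / S"
  have "\<bar>(1 + t) ^ m - 1\<bar> \<le> 3 * \<bar>t\<bar>"
    using norm_one_plus_power_m_minus_one_le[of t] abs_uncapped_ratio_le(1)[OF x, of n]
    abs_uncapped_ratio_le(2)[OF x] by (simp add: t_def)
  also have "\<dots> \<le> 3 * (\<bar>x\<bar> / ((1 - rate) * S))"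
    using abs_uncapped_ratio_le(1)[OF x, of n] by (simp add: t_def)
  finally have "\<bar>\<phi>\<bar> * \<bar>(1 + t) ^ m - 1\<bar> * \<bar>uncapped_u S m \<phi> x n\<bar>
      \<le> 1 * (3 * (\<bar>x\<bar> / ((1 - rate) * S))) * (\<bar>x\<bar> * rate ^ n)"
    using abs_phi_less_1 abs_uncapped_u_le[OF x, of n] by (intro mult_mono) auto
  then show ?thesis
    unfolding uncapped_step_eq by (simp add: t_def abs_mult power2_eq_square mult_ac)
qed

lemma summable_uncapped_u_squared: "\<bar>x\<bar> \<le> radius \<Longrightarrow> summable (\<lambda>n. uncapped_u S m \<phi> x n ^ 2)"
proof (rule summable_rate_bound[where B = "\<bar>x\<bar> * \<bar>x\<bar>"])
  fix n
  assume x: "\<bar>x\<bar> \<le> radius"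
  have "\<bar>uncapped_u S m \<phi> x n\<bar> * \<bar>uncapped_u S m \<phi> x n\<bar> \<le> \<bar>x\<bar> * (\<bar>x\<bar> * rate ^ n)"
    using abs_uncapped_u_le_abs[OF x, of n] abs_uncapped_u_le[OF x, of n] by (intro mult_mono) auto
  then show "\<bar>uncapped_u S m \<phi> x n ^ 2\<bar> \<le> \<bar>x\<bar> * \<bar>x\<bar> * rate ^ n"
    by (simp add: power2_eq_square abs_mult mult_ac)
qed

lemma summable_uncapped_s_times_u:
  "\<bar>x\<bar> \<le> radius \<Longrightarrow> summable (\<lambda>n. uncapped_s S m \<phi> x n * uncapped_u S m \<phi> x n)"
proof (rule summable_rate_bound[where B = "\<bar>x\<bar> / (1 - rate) * \<bar>x\<bar>"])
  fix n
  assume x: "\<bar>x\<bar> \<le> radius"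
  show "\<bar>uncapped_s S m \<phi> x n * uncapped_u S m \<phi> x n\<bar> \<le> \<bar>x\<bar> / (1 - rate) * \<bar>x\<bar> * rate ^ n"
    using abs_uncapped_s_le[OF x, of n] abs_uncapped_u_le[OF x, of n]
    unfolding abs_mult mult.assoc by (intro mult_mono) auto
qed

lemma uncapped_sum_first_order:
  "(\<lambda>x. (\<Sum>n. uncapped_u S m \<phi> x n) * (1 - \<phi>) - x) \<in> O[at 0](\<lambda>x. x ^ 2)"
proof (rule bigo_at_0_of_sums_geometric[OF radius_pos rate_nonneg rate_less_1,
      where a = "\<lambda>x n. uncapped_u S m \<phi> x (Suc n) - \<phi> * uncapped_u S m \<phi> x n"
        and C = "3 / ((1 - rate) * S)"])
  fix x :: real and n
  assume "\<bar>x\<bar> < radius"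
  then have x: "\<bar>x\<bar> \<le> radius" by simp
  show "(\<lambda>n. uncapped_u S m \<phi> x (Suc n) - \<phi> * uncapped_u S m \<phi> x n)
      sums ((\<Sum>n. uncapped_u S m \<phi> x n) * (1 - \<phi>) - x)"
    using sums_Suc_minus_mult[OF summable_uncapped_u[OF x]] by simp
  show "\<bar>uncapped_u S m \<phi> x (Suc n) - \<phi> * uncapped_u S m \<phi> x n\<bar>
      \<le> 3 / ((1 - rate) * S) * \<bar>x\<bar> ^ 2 * rate ^ n"
    by (rule abs_uncapped_step_le[OF x])
qed

lemma uncapped_sum_of_squares_first_order:
  "(\<lambda>x. (\<Sum>n. uncapped_u S m \<phi> x n ^ 2) * (1 - \<phi>\<^sup>2) - x\<^sup>2) \<in> O[at 0](\<lambda>x. x ^ 3)"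
proof (rule bigo_at_0_of_sums_geometric[OF radius_pos rate_nonneg rate_less_1,
      where a = "\<lambda>x n. uncapped_u S m \<phi> x (Suc n) ^ 2 - \<phi>\<^sup>2 * uncapped_u S m \<phi> x n ^ 2"
        and C = "6 / ((1 - rate) * S)"])
  fix x :: real and n
  assume "\<bar>x\<bar> < radius"
  then have x: "\<bar>x\<bar> \<le> radius" by simp
  show "(\<lambda>n. uncapped_u S m \<phi> x (Suc n) ^ 2 - \<phi>\<^sup>2 * uncapped_u S m \<phi> x n ^ 2)
      sums ((\<Sum>n. uncapped_u S m \<phi> x n ^ 2) * (1 - \<phi>\<^sup>2) - x\<^sup>2)"
    using sums_Suc_minus_mult[OF summable_uncapped_u_squared[OF x]] by simp
  let ?u = "uncapped_u S m \<phi> x"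
  have "\<bar>\<phi> * ?u n\<bar> \<le> 1 * \<bar>x\<bar>"
    unfolding abs_mult using abs_phi_less_1 abs_uncapped_u_le_abs[OF x, of n] by (intro mult_mono) auto
  then have "\<bar>?u (Suc n) + \<phi> * ?u n\<bar> \<le> 2 * \<bar>x\<bar>"
    using abs_triangle_ineq[of "?u (Suc n)" "\<phi> * ?u n"] abs_uncapped_u_le_abs[OF x, of "Suc n"]
    by linarith
  then have "\<bar>?u (Suc n) - \<phi> * ?u n\<bar> * \<bar>?u (Suc n) + \<phi> * ?u n\<bar>
      \<le> (3 / ((1 - rate) * S) * \<bar>x\<bar> ^ 2 * rate ^ n) * (2 * \<bar>x\<bar>)"
    using abs_uncapped_step_le[OF x, of n] by (intro mult_mono) auto
  moreover have "?u (Suc n) ^ 2 - \<phi>\<^sup>2 * ?u n ^ 2 = (?u (Suc n) - \<phi> * ?u n) * (?u (Suc n) + \<phi> * ?u n)"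
    by (simp add: power2_eq_square algebra_simps)
  ultimately show "\<bar>?u (Suc n) ^ 2 - \<phi>\<^sup>2 * ?u n ^ 2\<bar> \<le> 6 / ((1 - rate) * S) * \<bar>x\<bar> ^ 3 * rate ^ n"
    by (simp add: abs_mult power2_eq_square power3_eq_cube mult_ac)
qed

lemma uncapped_sum_second_order:
  "(\<lambda>x. (\<Sum>n. uncapped_u S m \<phi> x n) * (1 - \<phi>) - x
      - \<phi> * real m / S * (\<Sum>n. uncapped_s S m \<phi> x n * uncapped_u S m \<phi> x n))
    \<in> O[at 0](\<lambda>x. x ^ 3)"
proof (rule bigo_at_0_of_sums_geometric[OF radius_pos rate_nonneg rate_less_1,
      where a = "\<lambda>x n. uncapped_u S m \<phi> x (Suc n) - \<phi> * uncapped_u S m \<phi> x n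
        - \<phi> * real m / S * (uncapped_s S m \<phi> x n * uncapped_u S m \<phi> x n)"
        and C = "1 / ((1 - rate) * S)\<^sup>2"])
  fix x :: real and n
  assume "\<bar>x\<bar> < radius"
  then have x: "\<bar>x\<bar> \<le> radius" by simp
  let ?u = "uncapped_u S m \<phi> x" and ?s = "uncapped_s S m \<phi> x"
  show "(\<lambda>n. ?u (Suc n) - \<phi> * ?u n - \<phi> * real m / S * (?s n * ?u n))
      sums ((\<Sum>n. ?u n) * (1 - \<phi>) - x - \<phi> * real m / S * (\<Sum>n. ?s n * ?u n))"
  proof (rule sums_diff)
    show "(\<lambda>n. ?u (Suc n) - \<phi> * ?u n) sums ((\<Sum>n. ?u n) * (1 - \<phi>) - x)"
      using sums_Suc_minus_mult[OF summable_uncapped_u[OF x]] by simp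
    show "(\<lambda>n. \<phi> * real m / S * (?s n * ?u n)) sums (\<phi> * real m / S * (\<Sum>n. ?s n * ?u n))"
      by (rule sums_mult[OF summable_sums[OF summable_uncapped_s_times_u[OF x]]])
  qed
  define t where "t = ?s n / S"
  have "?u (Suc n) - \<phi> * ?u n - \<phi> * real m / S * (?s n * ?u n) = \<phi> * ?u n * ((1 + t) ^ m - 1 - real m * t)"
    using S_pos by (simp add: uncapped_Suc t_def field_simps)
  then have "\<bar>?u (Suc n) - \<phi> * ?u n - \<phi> * real m / S * (?s n * ?u n)\<bar>
      = \<bar>\<phi>\<bar> * \<bar>?u n\<bar> * \<bar>(1 + t) ^ m - 1 - real m * t\<bar>"
    by (simp add: abs_mult)
  also have "\<dots> \<le> 1 * (\<bar>x\<bar> * rate ^ n) * (\<bar>x\<bar> / ((1 - rate) * S))\<^sup>2"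
  proof -
    have "\<bar>t\<bar>\<^sup>2 \<le> (\<bar>x\<bar> / ((1 - rate) * S))\<^sup>2"
      using abs_uncapped_ratio_le(1)[OF x, of n] unfolding t_def by (rule power_mono) simp
    then show ?thesis
      using abs_phi_less_1 abs_uncapped_u_le[OF x, of n] abs_one_plus_power_minus_linear_le[OF m_le_2, of t]
      by (intro mult_mono) auto
  qed
  also have "\<dots> = 1 / ((1 - rate) * S)\<^sup>2 * \<bar>x\<bar> ^ 3 * rate ^ n"
    by (simp add: power2_eq_square power3_eq_cube)
  finally show "\<bar>?u (Suc n) - \<phi> * ?u n - \<phi> * real m / S * (?s n * ?u n)\<bar>
      \<le> 1 / ((1 - rate) * S)\<^sup>2 * \<bar>x\<bar> ^ 3 * rate ^ n" .
qed

lemma uncapped_cross_sum: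
  assumes x: "\<bar>x\<bar> \<le> radius"
  shows "2 * (\<Sum>n. uncapped_s S m \<phi> x n * uncapped_u S m \<phi> x n)
    = (\<Sum>n. uncapped_u S m \<phi> x n)\<^sup>2 + (\<Sum>n. uncapped_u S m \<phi> x n ^ 2)"
proof -
  have "(\<lambda>n. 2 * (uncapped_s S m \<phi> x n * uncapped_u S m \<phi> x n))
      sums ((\<Sum>n. uncapped_u S m \<phi> x n)\<^sup>2 + (\<Sum>n. uncapped_u S m \<phi> x n ^ 2))"
    using sums_partial_sum_times_term[OF summable_uncapped_u[OF x] summable_uncapped_u_squared[OF x]]
    by (simp add: uncapped_s_eq_sum mult.assoc)
  from sums_unique[OF this] show ?thesis
    using suminf_mult[OF summable_uncapped_s_times_u[OF x], of 2] by simp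
qed

lemma phi_denominators_nonzero: "1 - \<phi> \<noteq> 0" "1 + \<phi> \<noteq> 0" "1 - \<phi>\<^sup>2 \<noteq> 0"
  using abs_phi_less_1 by (auto simp: power2_eq_square abs_if square_eq_1_iff)

lemma uncapped_sum_linear_approx:
  "(\<lambda>x. (\<Sum>n. uncapped_u S m \<phi> x n) - x / (1 - \<phi>)) \<in> O[at 0](\<lambda>x. x\<^sup>2)"
proof -
  have "(\<lambda>x. ((\<Sum>n. uncapped_u S m \<phi> x n) * (1 - \<phi>) - x) / (1 - \<phi>)) \<in> O[at 0](\<lambda>x. x\<^sup>2)"
    using uncapped_sum_first_order phi_denominators_nonzero by simp
  also have "(\<lambda>x. ((\<Sum>n. uncapped_u S m \<phi> x n) * (1 - \<phi>) - x) / (1 - \<phi>))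
      = (\<lambda>x. (\<Sum>n. uncapped_u S m \<phi> x n) - x / (1 - \<phi>))"
    using phi_denominators_nonzero by (simp add: field_simps)
  finally show ?thesis .
qed

lemma uncapped_sum_square_approx:
  "(\<lambda>x. (\<Sum>n. uncapped_u S m \<phi> x n)\<^sup>2 - (x / (1 - \<phi>))\<^sup>2) \<in> O[at 0](\<lambda>x. x ^ 3)"
proof -
  define F where "F x = (\<Sum>n. uncapped_u S m \<phi> x n)" for x :: real
  have diff: "(\<lambda>x. F x - x / (1 - \<phi>)) \<in> O[at 0](\<lambda>x. x\<^sup>2)"
    unfolding F_def by (rule uncapped_sum_linear_approx)
  have "(\<lambda>x::real. x\<^sup>2) \<in> O[at 0](\<lambda>x. x)"
    using landau_o.small_imp_big[OF power_smallo_power_at_0[of 1 2]] by simp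
  moreover have "(\<lambda>x. x / (1 - \<phi>)) \<in> O[at 0](\<lambda>x. x)"
    using phi_denominators_nonzero by simp
  ultimately have "(\<lambda>x. (F x - x / (1 - \<phi>)) + 2 * (x / (1 - \<phi>))) \<in> O[at 0](\<lambda>x. x)"
    by (intro sum_in_bigo(1) landau_o.big_trans[OF diff] bigo_const_mult)
  also have "(\<lambda>x. (F x - x / (1 - \<phi>)) + 2 * (x / (1 - \<phi>))) = (\<lambda>x. F x + x / (1 - \<phi>))"
    by (simp add: algebra_simps)
  finally have "(\<lambda>x. (F x - x / (1 - \<phi>)) * (F x + x / (1 - \<phi>))) \<in> O[at 0](\<lambda>x. x\<^sup>2 * x)"
    by (rule landau_o.big.mult[OF diff])
  also have "(\<lambda>x. (F x - x / (1 - \<phi>)) * (F x + x / (1 - \<phi>))) = (\<lambda>x. (F x)\<^sup>2 - (x / (1 - \<phi>))\<^sup>2)"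
    by (simp add: power2_eq_square algebra_simps)
  also have "(\<lambda>x::real. x\<^sup>2 * x) = (\<lambda>x. x ^ 3)"
    by (simp add: power2_eq_square power3_eq_cube)
  finally show ?thesis
    unfolding F_def .
qed

lemma double_cross_limit_eq:
  "(x / (1 - \<phi>))\<^sup>2 + x\<^sup>2 / (1 - \<phi>\<^sup>2) = 2 * (x\<^sup>2 / ((1 - \<phi>)\<^sup>2 * (1 + \<phi>)))"
proof -
  have "1 - \<phi>\<^sup>2 = (1 - \<phi>) * (1 + \<phi>)"
    by (simp add: power2_eq_square algebra_simps)
  moreover have "(x / a)\<^sup>2 + x\<^sup>2 / (a * b) = x\<^sup>2 * (b + a) / (a\<^sup>2 * b)"
    if "a \<noteq> 0" "b \<noteq> 0" for a b :: real
    using that by (simp add: field_simps power2_eq_square)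
  note this[of "1 - \<phi>" "1 + \<phi>"]
  ultimately show ?thesis
    using phi_denominators_nonzero by simp
qed

lemma uncapped_cross_sum_approx:
  "(\<lambda>x. (\<Sum>n. uncapped_s S m \<phi> x n * uncapped_u S m \<phi> x n) - x\<^sup>2 / ((1 - \<phi>)\<^sup>2 * (1 + \<phi>)))
    \<in> O[at 0](\<lambda>x. x ^ 3)"
proof -
  define F where "F x = (\<Sum>n. uncapped_u S m \<phi> x n)" for x :: real
  define Q where "Q x = (\<Sum>n. uncapped_u S m \<phi> x n ^ 2)" for x :: real
  define T where "T x = (\<Sum>n. uncapped_s S m \<phi> x n * uncapped_u S m \<phi> x n)" for x :: real
  note \<phi> = phi_denominators_nonzero
  have "(\<lambda>x. (Q x * (1 - \<phi>\<^sup>2) - x\<^sup>2) / (1 - \<phi>\<^sup>2)) \<in> O[at 0](\<lambda>x. x ^ 3)"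
    using uncapped_sum_of_squares_first_order \<phi> by (simp add: Q_def)
  also have "(\<lambda>x. (Q x * (1 - \<phi>\<^sup>2) - x\<^sup>2) / (1 - \<phi>\<^sup>2)) = (\<lambda>x. Q x - x\<^sup>2 / (1 - \<phi>\<^sup>2))"
    using \<phi> by (simp add: field_simps)
  finally have "(\<lambda>x. Q x - x\<^sup>2 / (1 - \<phi>\<^sup>2)) \<in> O[at 0](\<lambda>x. x ^ 3)" .
  with uncapped_sum_square_approx
  have "(\<lambda>x. ((F x)\<^sup>2 - (x / (1 - \<phi>))\<^sup>2 + (Q x - x\<^sup>2 / (1 - \<phi>\<^sup>2))) / 2) \<in> O[at 0](\<lambda>x. x ^ 3)"
    unfolding F_def by (simp add: sum_in_bigo(1))
  also have "?this \<longleftrightarrow> (\<lambda>x. T x - x\<^sup>2 / ((1 - \<phi>)\<^sup>2 * (1 + \<phi>))) \<in> O[at 0](\<lambda>x. x ^ 3)"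
  proof (rule landau_o.big.in_cong, rule eventually_mono[OF eventually_abs_le_radius])
    fix x :: real
    assume "\<bar>x\<bar> \<le> radius"
    then have "2 * T x = (F x)\<^sup>2 + Q x"
      unfolding F_def Q_def T_def by (rule uncapped_cross_sum)
    moreover have "(x / (1 - \<phi>))\<^sup>2 + x\<^sup>2 / (1 - \<phi>\<^sup>2) = 2 * (x\<^sup>2 / ((1 - \<phi>)\<^sup>2 * (1 + \<phi>)))"
      by (rule double_cross_limit_eq)
    moreover have "(a - b + (c - d)) / 2 = e - f" if "2 * e = a + c" "b + d = 2 * f" for a b c d e f :: real
      using that by (simp add: field_simps)
    ultimately show "((F x)\<^sup>2 - (x / (1 - \<phi>))\<^sup>2 + (Q x - x\<^sup>2 / (1 - \<phi>\<^sup>2))) / 2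
        = T x - x\<^sup>2 / ((1 - \<phi>)\<^sup>2 * (1 + \<phi>))"
      by blast
  qed
  finally show ?thesis
    unfolding T_def .
qed

lemma uncapped_sum_expansion:
  "(\<lambda>x. (\<Sum>n. uncapped_u S m \<phi> x n)
      - (x / (1 - \<phi>) + (1 / S) * (real m * \<phi> / ((1 - \<phi>) ^ 3 * (1 + \<phi>))) * x\<^sup>2))
    \<in> o[at 0](\<lambda>x. x\<^sup>2)"
proof -
  define F where "F x = (\<Sum>n. uncapped_u S m \<phi> x n)" for x :: real
  define T where "T x = (\<Sum>n. uncapped_s S m \<phi> x n * uncapped_u S m \<phi> x n)" for x :: real
  define c where "c = \<phi> * real m / S"
  have "(\<lambda>x. (F x * (1 - \<phi>) - x - c * T x) + c * (T x - x\<^sup>2 / ((1 - \<phi>)\<^sup>2 * (1 + \<phi>))))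
      \<in> O[at 0](\<lambda>x. x ^ 3)"
    using uncapped_sum_second_order uncapped_cross_sum_approx
    unfolding F_def T_def c_def by (intro sum_in_bigo(1) bigo_const_mult)
  also have "(\<lambda>x. (F x * (1 - \<phi>) - x - c * T x) + c * (T x - x\<^sup>2 / ((1 - \<phi>)\<^sup>2 * (1 + \<phi>))))
      = (\<lambda>x. (1 - \<phi>) * (F x - (x / (1 - \<phi>) + (1 / S) * (real m * \<phi> / ((1 - \<phi>) ^ 3 * (1 + \<phi>))) * x\<^sup>2)))"
  proof -
    have "(A * a - x - c * B) + c * (B - x\<^sup>2 / (a\<^sup>2 * b))
        = a * (A - (x / a + (1 / S) * (real m * \<phi> / (a ^ 3 * b)) * x\<^sup>2))"
      if "a \<noteq> 0" "b \<noteq> 0" for A B a b x :: real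
      using that S_pos by (simp add: c_def field_simps power2_eq_square power3_eq_cube)
    with phi_denominators_nonzero show ?thesis by simp
  qed
  finally have "(\<lambda>x. F x - (x / (1 - \<phi>) + (1 / S) * (real m * \<phi> / ((1 - \<phi>) ^ 3 * (1 + \<phi>))) * x\<^sup>2))
      \<in> O[at 0](\<lambda>x. x ^ 3)"
    using phi_denominators_nonzero by simp
  from landau_o.big_small_trans[OF this power_smallo_power_at_0[of 2 3]] show ?thesis
    by (simp add: F_def)
qed

lemma uncapped_sum_power_series:
  "\<exists>a :: nat \<Rightarrow> real. \<forall>x \<in> {-radius<..<radius}.
     (\<lambda>k. a k * x ^ k) sums (\<Sum>n. uncapped_u S m \<phi> x n)"
proof -
  have "norm (uncapped_u S m \<phi> z n) \<le> radius * rate ^ n" if "z \<in> ball 0 radius" for z :: complex and n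
  proof -
    from that have "norm z \<le> radius" by simp
    then have "norm (uncapped_u S m \<phi> z n) \<le> norm z * rate ^ n"
      by (rule norm_uncapped_le(1))
    also have "\<dots> \<le> radius * rate ^ n"
      using \<open>norm z \<le> radius\<close> rate_nonneg by (intro mult_right_mono) auto
    finally show ?thesis .
  qed
  then have bound: "\<forall>\<^sub>F n in sequentially. \<forall>z\<in>ball (0::complex) radius. norm (uncapped_u S m \<phi> z n) \<le> radius * rate ^ n"
    by (intro always_eventually allI ballI)
  have deriv: "((\<lambda>z. uncapped_u S m \<phi> z n) has_field_derivative deriv (\<lambda>z. uncapped_u S m \<phi> z n) z) (at z)"
    for n and z :: complex
    using holomorphic_uncapped[of S m \<phi> n] by (auto intro: holomorphic_derivI)
  obtain g g' :: "complex \<Rightarrow> complex"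
    where g: "\<forall>z \<in> ball 0 radius. (\<lambda>n. uncapped_u S m \<phi> z n) sums g z \<and>
      (\<lambda>n. deriv (\<lambda>z. uncapped_u S m \<phi> z n) z) sums g' z \<and> (g has_field_derivative g' z) (at z)"
    using series_and_derivative_comparison[OF open_ball summable_mult[OF summable_geometric] deriv bound]
      rate_nonneg rate_less_1 by auto
  have "g holomorphic_on ball 0 radius"
    using g by (auto simp: holomorphic_on_open)
  then obtain a :: "nat \<Rightarrow> real" where a: "\<forall>x \<in> {-radius<..<radius}. (\<lambda>k. a k * x ^ k) sums Re (g (of_real x))"
    using holomorphic_on_ball_real_power_series by blast
  have "g (of_real x) = of_real (\<Sum>n. uncapped_u S m \<phi> x n)" if "x \<in> {-radius<..<radius}" for x
  proof -
    from that have "complex_of_real x \<in> ball 0 radius" by (simp add: dist_0_norm abs_less_iff)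
    with g have "(\<lambda>n. uncapped_u S m \<phi> (of_real x) n) sums g (of_real x)"
      by blast
    then have "(\<lambda>n. of_real (uncapped_u S m \<phi> x n)) sums g (of_real x)"
      by (simp add: uncapped_of_real)
    moreover have "(\<lambda>n. complex_of_real (uncapped_u S m \<phi> x n)) sums of_real (\<Sum>n. uncapped_u S m \<phi> x n)"
      using that summable_uncapped_u[of x] by (intro sums_of_real summable_sums) auto
    ultimately show ?thesis by (rule sums_unique2)
  qed
  with a show ?thesis by auto
qed

end

theorem proposition4p4:
  fixes S \<phi> :: real and \<zeta> :: nat
  assumes "S > 0" and "\<zeta> \<in> {0, 1}" and "-1 < \<phi>" and "\<phi> < 1"
  shows "\<exists>R > 0.
     (\<forall>x \<in> {-R<..<R}. scen_regular S \<zeta> \<phi> x \<and> summable (scen_u S \<zeta> \<phi> x)) \<and>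
     (\<exists>a :: nat \<Rightarrow> real. \<forall>x \<in> {-R<..<R}.
        (\<lambda>k. a k * x ^ k) sums (\<Sum>n. scen_u S \<zeta> \<phi> x n)) \<and>
     (\<lambda>x. (\<Sum>n. scen_u S \<zeta> \<phi> x n)
          - (x / (1 - \<phi>) + (1 / S) * ((1 + real \<zeta>) * \<phi> / ((1 - \<phi>) ^ 3 * (1 + \<phi>))) * x ^ 2))
       \<in> o[at (0::real)](\<lambda>x. x ^ 2)"
proof -
  interpret impact_params S \<phi> "1 + \<zeta>"
    using assms by unfold_locales auto
  have scen: "scen_u S \<zeta> \<phi> x = uncapped_u S (1 + \<zeta>) \<phi> x" if "\<bar>x\<bar> \<le> radius" for x
    using scen_u_eq_uncapped_u[OF refl that] .
  have "\<forall>\<^sub>F x in at 0. (\<Sum>n. uncapped_u S (1 + \<zeta>) \<phi> x n) = (\<Sum>n. scen_u S \<zeta> \<phi> x n)"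
    using eventually_abs_le_radius by eventually_elim (simp add: scen)
  then have expansion: "(\<lambda>x. (\<Sum>n. scen_u S \<zeta> \<phi> x n)
      - (x / (1 - \<phi>) + (1 / S) * ((1 + real \<zeta>) * \<phi> / ((1 - \<phi>) ^ 3 * (1 + \<phi>))) * x ^ 2))
    \<in> o[at 0](\<lambda>x. x ^ 2)"
    using uncapped_sum_expansion
    by (subst (asm) landau_o.small.in_cong[where g = "\<lambda>x. (\<Sum>n. scen_u S \<zeta> \<phi> x n) - _ x"])
      (auto elim: eventually_mono)
  have power_series: "\<exists>a. \<forall>x\<in>{-radius<..<radius}. (\<lambda>k. a k * x ^ k) sums (\<Sum>n. scen_u S \<zeta> \<phi> x n)"
    using uncapped_sum_power_series scen by fastforce
  show ?thesis
    using radius_pos scen_regular_small[OF refl] summable_uncapped_u scen power_series expansion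
    by (intro exI[of _ radius]) auto
qed

end
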